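(* Let $m\ge1$, let $p_1,\dots,p_m\ge 0$ with $p_1+\cdots+p_m=1$, and let $S$ be a finite nonempty word on $[m]=\{1,\dots,m\}$ all of whose letters have positive probability. Roll a die showing face $i$ with probability $p_i$ independently until $S$ first appears as a block of consecutive outcomes, and let $Y$ be the number of rolls. Then for every integer $n\ge 1$, \[ E(Y^n) = \sum_{\pi\in\Pi_n} |\pi|! \prod_{B\in \pi} \sum_{R\in\operatorname{overlap}(S)} \frac{(1-|R|)^{|B|} - (-|R|)^{|B|}}{P(R)}. \]
   Context: For a word $w=w_1\cdots w_\ell$, $|w|=\ell$ and $P(w)=p_{w_1}\cdots p_{w_\ell}$. An overlap of $S$ is a nonempty word that is both a prefix and a suffix of $S$ (including $S$ itself); $\operatorname{overlap}(S)$ is the set of overlaps. $\Pi_n$ is the set of set partitions of $\{1,\dots,n\}$; $|\pi|$ is the number of blocks of $\pi$ and $|B|$ the size of block $B$. Convention $0^0=1$. *)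

theory Defs
  imports "HOL-Probability.Probability" "HOL-Library.Sublist"
begin

definition die :: "nat \<Rightarrow> (nat \<Rightarrow> real) \<Rightarrow> nat pmf" where
  "die m p = embed_pmf (\<lambda>i. if i \<in> {1..m} then p i else 0)"

definition word_prob :: "(nat \<Rightarrow> real) \<Rightarrow> nat list \<Rightarrow> real" where
  "word_prob p w = prod_list (map p w)"

definition overlaps :: "'a list \<Rightarrow> 'a list set" where
  "overlaps S = {R. R \<noteq> [] \<and> prefix R S \<and> suffix R S}"

definition set_partitions :: "nat \<Rightarrow> nat set set set" where
  "set_partitions n = {P. partition_on {1..n} P}"

definition waiting_time :: "'a list \<Rightarrow> 'a stream \<Rightarrow> nat" where
  "waiting_time S \<omega> = (LEAST k. sublist S (stake k \<omega>))"

end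

theory Submission
  imports Defs
begin

(*
  Write a_k = P(Y > k) and q_j = P(Y = j); both are finite sums over words of rolls.
  If a word u avoids S, there is exactly one overlap R of S such that u R ends with the
  first occurrence of S (R is the shortest prefix of S with S occurring in u R).
  Conditioning on the next |R| rolls being R gives the overlap identity
  a_k = \<Sum>_R q_(k+|R|) / P(R).  Together with q_(k+1) = a_k - a_(k+1), multiplying by
  (k+1)^n, summing over k and expanding binomially turns this into the recurrence
  M_n = \<Sum>_(k=1..n) (n choose k) c_k M_(n-k) for the moments M_n = E(Y^n), where
  c_k = \<Sum>_R ((1-|R|)^k - (-|R|)^k) / P(R).  The bound a_(k+|S|) \<le> (1 - P(S)) a_k makes
  the tail geometric, so Y is finite almost surely and all these series converge.
  On the other side, |\<pi>|! \<Prod>_B c_|B| summed over set partitions is a sum over ordered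
  set partitions, and splitting off the first block shows that it obeys the same
  recurrence.
*)

section \<open>Ordered set partitions\<close>

definition ordered_partition_sum :: "(nat \<Rightarrow> real) \<Rightarrow> 'a set \<Rightarrow> real" where
  "ordered_partition_sum c A = (\<Sum>\<pi> | partition_on A \<pi>. fact (card \<pi>) * (\<Prod>B\<in>\<pi>. c (card B)))"

lemma fact_card_mult_prod_eq_sum_remove:
  fixes f :: "'a \<Rightarrow> real"
  assumes "finite X" "X \<noteq> {}"
  shows "fact (card X) * prod f X = (\<Sum>x\<in>X. f x * (fact (card (X - {x})) * prod f (X - {x})))"
proof -
  have "(\<Sum>x\<in>X. f x * (fact (card (X - {x})) * prod f (X - {x})))
      = (\<Sum>x\<in>X. fact (card X - 1) * prod f X)"
    using assms(1) by (intro sum.cong refl) (simp add: prod.remove)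
  also have "\<dots> = real (card X) * fact (card X - 1) * prod f X"
    by simp
  also have "real (card X) * fact (card X - 1) = fact (card X)"
    using assms by (simp add: fact_reduce[of "card X"] card_gt_0_iff)
  finally show ?thesis ..
qed

lemma bij_betw_insert_block:
  "bij_betw (\<lambda>(B, \<pi>). (insert B \<pi>, B))
     (SIGMA B:Pow A - {{}}. {\<pi>. partition_on (A - B) \<pi>}) (SIGMA \<pi>:{\<pi>. partition_on A \<pi>}. \<pi>)"
proof (rule bij_betw_byWitness[where f' = "\<lambda>(\<pi>, B). (B, \<pi> - {B})"])
  have block_notin: "B \<notin> \<pi>" if "B \<noteq> {}" "partition_on (A - B) \<pi>" for B \<pi>
    using that by (auto simp: partition_on_def)
  have disjnt_rest: "disjnt B (\<Union>(\<pi> - {B}))" if "partition_on A \<pi>" "B \<in> \<pi>" for B \<pi>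
    using that by (auto simp: partition_on_def disjnt_def disjoint_def)
  show "\<forall>a\<in>SIGMA B:Pow A - {{}}. {\<pi>. partition_on (A - B) \<pi>}.
          (\<lambda>(\<pi>, B). (B, \<pi> - {B})) ((\<lambda>(B, \<pi>). (insert B \<pi>, B)) a) = a"
    using block_notin by auto
  show "\<forall>a\<in>SIGMA \<pi>:{\<pi>. partition_on A \<pi>}. \<pi>.
          (\<lambda>(B, \<pi>). (insert B \<pi>, B)) ((\<lambda>(\<pi>, B). (B, \<pi> - {B})) a) = a"
    by auto
  have "partition_on A (insert B \<pi>)" if "B \<subseteq> A" "B \<noteq> {}" "partition_on (A - B) \<pi>" for B \<pi>
    using that by (subst partition_on_insert) (auto simp: partition_on_def disjnt_def)
  then show "(\<lambda>(B, \<pi>). (insert B \<pi>, B)) ` (SIGMA B:Pow A - {{}}. {\<pi>. partition_on (A - B) \<pi>})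
          \<subseteq> (SIGMA \<pi>:{\<pi>. partition_on A \<pi>}. \<pi>)"
    by auto
  show "(\<lambda>(\<pi>, B). (B, \<pi> - {B})) ` (SIGMA \<pi>:{\<pi>. partition_on A \<pi>}. \<pi>)
          \<subseteq> (SIGMA B:Pow A - {{}}. {\<pi>. partition_on (A - B) \<pi>})"
  proof clarsimp
    fix \<pi> B assume \<pi>: "partition_on A \<pi>" "B \<in> \<pi>"
    have "partition_on A (insert B (\<pi> - {B}))"
      using \<pi> by (simp add: insert_absorb)
    then show "B \<subseteq> A \<and> B \<noteq> {} \<and> partition_on (A - B) (\<pi> - {B})"
      by (subst (asm) partition_on_insert[OF disjnt_rest[OF \<pi>]]) simp
  qed
qed

lemma ordered_partition_sum_first_block:
  assumes "finite A" "A \<noteq> {}"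
  shows "ordered_partition_sum c A = (\<Sum>B\<in>Pow A - {{}}. c (card B) * ordered_partition_sum c (A - B))"
proof -
  define g :: "'a set set \<Rightarrow> 'a set \<Rightarrow> real"
    where "g \<pi> B = c (card B) * (fact (card (\<pi> - {B})) * (\<Prod>B'\<in>\<pi> - {B}. c (card B')))" for \<pi> B
  have fin_parts: "finite {\<pi>. partition_on A' \<pi>}" if "A' \<subseteq> A" for A'
    using that assms(1) by (intro finitely_many_partition_on) (rule finite_subset)
  have "ordered_partition_sum c A = (\<Sum>\<pi> | partition_on A \<pi>. \<Sum>B\<in>\<pi>. g \<pi> B)"
    unfolding ordered_partition_sum_def g_def
  proof (intro sum.cong refl fact_card_mult_prod_eq_sum_remove)
    fix \<pi> assume "\<pi> \<in> {\<pi>. partition_on A \<pi>}"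
    then show "finite \<pi>" "\<pi> \<noteq> {}"
      using assms finite_elements by (auto simp: partition_on_def)
  qed
  also have "\<dots> = (\<Sum>(\<pi>, B)\<in>(SIGMA \<pi>:{\<pi>. partition_on A \<pi>}. \<pi>). g \<pi> B)"
    using fin_parts assms(1) finite_elements by (subst sum.Sigma) auto
  also have "\<dots> = (\<Sum>(B, \<pi>)\<in>(SIGMA B:Pow A - {{}}. {\<pi>. partition_on (A - B) \<pi>}). g (insert B \<pi>) B)"
    by (subst sum.reindex_bij_betw[OF bij_betw_insert_block, symmetric]) (simp add: case_prod_beta)
  also have "\<dots> = (\<Sum>B\<in>Pow A - {{}}. \<Sum>\<pi> | partition_on (A - B) \<pi>. g (insert B \<pi>) B)"
    using fin_parts assms(1) by (subst sum.Sigma) auto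
  also have "\<dots> = (\<Sum>B\<in>Pow A - {{}}. c (card B) * ordered_partition_sum c (A - B))"
    unfolding ordered_partition_sum_def sum_distrib_left
  proof (intro sum.cong refl)
    fix B \<pi> assume "B \<in> Pow A - {{}}" "\<pi> \<in> {\<pi>. partition_on (A - B) \<pi>}"
    then have "B \<notin> \<pi>" by (auto simp: partition_on_def)
    then show "g (insert B \<pi>) B = c (card B) * (fact (card \<pi>) * (\<Prod>B\<in>\<pi>. c (card B)))"
      by (simp add: g_def insert_Diff_if)
  qed
  finally show ?thesis .
qed

lemma sum_nonempty_subsets_by_card:
  fixes h :: "nat \<Rightarrow> real"
  assumes "finite A"
  shows "(\<Sum>B\<in>Pow A - {{}}. h (card B)) = (\<Sum>k=1..card A. real (card A choose k) * h k)"
proof -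
  have "card B \<in> {1..card A}" if "B \<in> Pow A - {{}}" for B
    using that assms finite_subset[of B A] by (auto simp: card_mono Suc_le_eq card_gt_0_iff)
  then have "card ` (Pow A - {{}}) \<subseteq> {1..card A}"
    by blast
  then have "(\<Sum>B\<in>Pow A - {{}}. h (card B))
      = (\<Sum>k=1..card A. \<Sum>B | B \<in> Pow A - {{}} \<and> card B = k. h (card B))"
    using assms by (intro sum.group[symmetric]) auto
  also have "\<dots> = (\<Sum>k=1..card A. real (card {B. B \<subseteq> A \<and> card B = k}) * h k)"
  proof (intro sum.cong refl)
    fix k :: nat assume "k \<in> {1..card A}"
    then have "{B \<in> Pow A - {{}}. card B = k} = {B. B \<subseteq> A \<and> card B = k}"
      by auto
    then show "(\<Sum>B | B \<in> Pow A - {{}} \<and> card B = k. h (card B))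
        = real (card {B. B \<subseteq> A \<and> card B = k}) * h k"
      by simp
  qed
  finally show ?thesis
    using assms by (simp add: n_subsets)
qed

lemma ordered_partition_sum_eq_recurrence:
  fixes f :: "nat \<Rightarrow> real"
  assumes "finite A" and f0: "f 0 = 1"
    and f_rec: "\<And>n. n \<ge> 1 \<Longrightarrow> f n = (\<Sum>k=1..n. real (n choose k) * c k * f (n - k))"
  shows "ordered_partition_sum c A = f (card A)"
  using assms(1)
proof (induction "card A" arbitrary: A rule: less_induct)
  case less
  show ?case
  proof (cases "A = {}")
    case True
    then show ?thesis
      by (simp add: ordered_partition_sum_def partition_on_empty f0)
  next
    case False
    have "ordered_partition_sum c A = (\<Sum>B\<in>Pow A - {{}}. c (card B) * f (card A - card B))"
    proof (subst ordered_partition_sum_first_block[OF less.prems False], intro sum.cong refl)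
      fix B assume B: "B \<in> Pow A - {{}}"
      then have "finite B" "B \<noteq> {}" "B \<subseteq> A"
        using less.prems by (auto intro: finite_subset)
      then have "card (A - B) < card A" "card (A - B) = card A - card B"
        using less.prems card_mono[of A B] card_gt_0_iff[of B] by (auto simp: card_Diff_subset)
      then show "c (card B) * ordered_partition_sum c (A - B) = c (card B) * f (card A - card B)"
        using less.hyps less.prems by simp
    qed
    also have "\<dots> = (\<Sum>k=1..card A. real (card A choose k) * c k * f (card A - k))"
      using sum_nonempty_subsets_by_card[OF less.prems, of "\<lambda>k. c k * f (card A - k)"]
      by (simp add: mult.assoc)
    also have "\<dots> = f (card A)"
      using less.prems False by (simp add: f_rec card_gt_0_iff Suc_le_eq)
    finally show ?thesis .
  qed
qed

section \<open>A moment recurrence\<close>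

lemma summable_power_times_geometric:
  fixes x :: real
  assumes "\<bar>x\<bar> < 1"
  shows "summable (\<lambda>j. real j ^ i * x ^ j)"
  using assms
proof (induction i arbitrary: x)
  case 0
  then show ?case
    using summable_geometric[of x] by simp
next
  case (Suc i)
  have "summable (\<lambda>j. diffs (\<lambda>j. real j ^ i) j * x ^ j)"
    by (rule termdiff_converges[of x 1]) (use Suc in auto)
  then have "summable (\<lambda>j. real (Suc j) ^ Suc i * x ^ j)"
    by (simp add: diffs_def)
  then show ?case
    using summable_powser_split_head[of "\<lambda>j. real j ^ Suc i" x] by simp
qed

lemma sums_shifted_power:
  fixes q :: "nat \<Rightarrow> real"
  assumes "\<And>i. summable (\<lambda>j. real j ^ i * q j)"
  shows "(\<lambda>j. (real j + y) ^ n * q j) sums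
           (\<Sum>i\<le>n. real (n choose i) * y ^ i * (\<Sum>j. real j ^ (n - i) * q j))"
proof -
  have "(\<lambda>j. \<Sum>i\<le>n. real (n choose i) * y ^ i * (real j ^ (n - i) * q j)) sums
          (\<Sum>i\<le>n. real (n choose i) * y ^ i * (\<Sum>j. real j ^ (n - i) * q j))"
    by (intro sums_sum sums_mult summable_sums assms)
  moreover have "(real j + y) ^ n * q j = (\<Sum>i\<le>n. real (n choose i) * y ^ i * (real j ^ (n - i) * q j))" for j
    by (subst add.commute, subst binomial_ring) (simp add: sum_distrib_right mult.assoc)
  ultimately show ?thesis
    by simp
qed

lemma sums_power_times_shifted_difference:
  fixes q :: "nat \<Rightarrow> real"
  assumes summable: "\<And>i. summable (\<lambda>j. real j ^ i * q j)"
    and vanish: "\<And>j. j < r \<Longrightarrow> q j = 0" and "n \<ge> 1"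
  shows "(\<lambda>k. real (Suc k) ^ n * (q (k + r) - q (Suc k + r))) sums
           (\<Sum>i\<le>n. real (n choose i) * ((1 - real r) ^ i - (- real r) ^ i) * (\<Sum>j. real j ^ (n - i) * q j))"
proof -
  have head1: "(\<Sum>j<r. (real j + (1 - real r)) ^ n * q j) = 0"
    using vanish by (intro sum.neutral) simp
  have head0: "(\<Sum>j<Suc r. (real j + (- real r)) ^ n * q j) = 0"
    using vanish \<open>n \<ge> 1\<close> by (intro sum.neutral) (auto simp: less_Suc_eq)
  have "(\<lambda>k. (real (k + r) + (1 - real r)) ^ n * q (k + r)) sums
          (\<Sum>i\<le>n. real (n choose i) * (1 - real r) ^ i * (\<Sum>j. real j ^ (n - i) * q j))"
    using sums_shifted_power[OF summable, of "1 - real r" n] head1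
    by (subst sums_iff_shift[where f = "\<lambda>j. (real j + (1 - real r)) ^ n * q j"]) simp
  moreover have "(\<lambda>k. (real (k + Suc r) + (- real r)) ^ n * q (k + Suc r)) sums
          (\<Sum>i\<le>n. real (n choose i) * (- real r) ^ i * (\<Sum>j. real j ^ (n - i) * q j))"
    using sums_shifted_power[OF summable, of "- real r" n] head0
    by (subst sums_iff_shift[where f = "\<lambda>j. (real j + (- real r)) ^ n * q j"]) simp
  ultimately have "(\<lambda>k. (real (k + r) + (1 - real r)) ^ n * q (k + r)
                      - (real (k + Suc r) + (- real r)) ^ n * q (k + Suc r)) sums
          ((\<Sum>i\<le>n. real (n choose i) * (1 - real r) ^ i * (\<Sum>j. real j ^ (n - i) * q j))
           - (\<Sum>i\<le>n. real (n choose i) * (- real r) ^ i * (\<Sum>j. real j ^ (n - i) * q j)))"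
    by (rule sums_diff)
  then show ?thesis
    by (simp add: sum_subtractf[symmetric] algebra_simps)
qed

lemma moment_recurrence:
  fixes q a :: "nat \<Rightarrow> real" and Ov :: "'b set" and len :: "'b \<Rightarrow> nat" and w :: "'b \<Rightarrow> real"
  assumes q_Suc: "\<And>k. q (Suc k) = a k - a (Suc k)"
    and a_eq: "\<And>k. a k = (\<Sum>R\<in>Ov. q (k + len R) / w R)"
    and vanish: "\<And>R j. R \<in> Ov \<Longrightarrow> j < len R \<Longrightarrow> q j = 0"
    and summable: "\<And>i. summable (\<lambda>j. real j ^ i * q j)"
    and "n \<ge> 1"
  shows "(\<Sum>j. real j ^ n * q j) =
    (\<Sum>k=1..n. real (n choose k) * (\<Sum>R\<in>Ov. ((1 - real (len R)) ^ k - (- real (len R)) ^ k) / w R)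
      * (\<Sum>j. real j ^ (n - k) * q j))"
proof -
  define M where "M = (\<lambda>i. \<Sum>j. real j ^ i * q j)"
  define d where "d = (\<lambda>R i. ((1 - real (len R)) ^ i - (- real (len R)) ^ i) / w R)"
  have "(\<lambda>k. \<Sum>R\<in>Ov. real (Suc k) ^ n * (q (k + len R) - q (Suc k + len R)) / w R) sums
          (\<Sum>R\<in>Ov. (\<Sum>i\<le>n. real (n choose i)
              * ((1 - real (len R)) ^ i - (- real (len R)) ^ i) * M (n - i)) / w R)"
    unfolding M_def
    by (intro sums_sum sums_divide sums_power_times_shifted_difference summable vanish \<open>n \<ge> 1\<close>)
  moreover have "(\<Sum>R\<in>Ov. real (Suc k) ^ n * (q (k + len R) - q (Suc k + len R)) / w R)
                   = real (Suc k) ^ n * q (Suc k)" for k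
  proof -
    have "q (Suc k) = (\<Sum>R\<in>Ov. q (k + len R) / w R) - (\<Sum>R\<in>Ov. q (Suc k + len R) / w R)"
      by (simp only: q_Suc a_eq)
    then show ?thesis
      by (simp add: sum_distrib_left sum_subtractf[symmetric] diff_divide_distrib algebra_simps)
  qed
  ultimately have "(\<lambda>k. real (Suc k) ^ n * q (Suc k)) sums
      (\<Sum>R\<in>Ov. \<Sum>i\<le>n. real (n choose i) * d R i * M (n - i))"
    by (simp add: d_def sum_divide_distrib)
  then have "M n = (\<Sum>i\<le>n. real (n choose i) * (\<Sum>R\<in>Ov. d R i) * M (n - i))"
    using \<open>n \<ge> 1\<close> unfolding M_def
    by (subst (asm) sums_Suc_iff)
      (simp add: sums_iff sum.swap[of _ Ov] sum_distrib_left sum_distrib_right mult.assoc)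
  also have "\<dots> = (\<Sum>i=1..n. real (n choose i) * (\<Sum>R\<in>Ov. d R i) * M (n - i))"
    by (simp add: atMost_atLeast0 sum.atLeast_Suc_atMost d_def)
  finally show ?thesis
    by (simp add: M_def d_def)
qed

lemma geometric_bound_of_periodic_contraction:
  fixes a :: "nat \<Rightarrow> real"
  assumes "L > 0" "0 < \<theta>" "\<theta> \<le> 1"
    and le_1: "\<And>k. a k \<le> 1" and contract: "\<And>k. a (k + L) \<le> \<theta> * a k"
  shows "a k \<le> root L \<theta> ^ k / \<theta>"
proof -
  define i where "i = k div L"
  have blocks: "a (j * L + s) \<le> \<theta> ^ j" for j s
  proof (induction j)
    case (Suc j)
    have "a (Suc j * L + s) \<le> \<theta> * a (j * L + s)"
      using contract[of "j * L + s"] by (simp add: algebra_simps)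
    also have "\<dots> \<le> \<theta> * \<theta> ^ j"
      using Suc \<open>0 < \<theta>\<close> by simp
    finally show ?case
      by simp
  qed (simp add: le_1)
  have "a k = a (i * L + k mod L)"
    by (simp add: i_def)
  also have "\<dots> \<le> \<theta> ^ i"
    by (rule blocks)
  also have "\<theta> ^ i = root L \<theta> ^ (L * i + L) / \<theta>"
    using assms by (simp add: power_add power_mult)
  also have "\<dots> \<le> root L \<theta> ^ k / \<theta>"
  proof (intro divide_right_mono power_decreasing)
    have "k = L * i + k mod L" "k mod L < L"
      using \<open>L > 0\<close> by (simp_all add: i_def)
    then show "k \<le> L * i + L"
      by linarith
  qed (use assms in \<open>auto simp: real_root_ge_zero\<close>)
  finally show ?thesis .
qed

section \<open>Words and first occurrences\<close>

definition words :: "'a set \<Rightarrow> nat \<Rightarrow> 'a list set" where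
  "words A N = {w. set w \<subseteq> A \<and> length w = N}"

lemma finite_words: "finite A \<Longrightarrow> finite (words A N)"
  unfolding words_def by (rule finite_lists_length_eq)

lemma words_0 [simp]: "words A 0 = {[]}"
  by (auto simp: words_def)

lemma sum_words_Suc: "(\<Sum>w\<in>words A (Suc N). f w) = (\<Sum>x\<in>A. \<Sum>w\<in>words A N. f (x # w))"
proof -
  have inj: "inj_on (\<lambda>(w, x). x # w) (words A N \<times> A)"
    by (auto simp: inj_on_def)
  have "(\<Sum>w\<in>words A (Suc N). f w) = (\<Sum>(w, x)\<in>words A N \<times> A. f (x # w))"
    unfolding words_def lists_length_Suc_eq
    by (subst sum.reindex[OF inj[unfolded words_def]]) (simp add: case_prod_beta)
  then show ?thesis
    by (simp add: sum.cartesian_product[symmetric] sum.swap[of _ A])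
qed

lemma sum_words_add: "(\<Sum>w\<in>words A (k + l). f w) = (\<Sum>u\<in>words A k. \<Sum>v\<in>words A l. f (u @ v))"
proof -
  have split: "words A (k + l) = (\<lambda>(u, v). u @ v) ` (words A k \<times> words A l)"
  proof (intro equalityI subsetI)
    fix w assume "w \<in> words A (k + l)"
    then have "(take k w, drop k w) \<in> words A k \<times> words A l"
      by (auto simp: words_def dest: in_set_takeD in_set_dropD)
    then show "w \<in> (\<lambda>(u, v). u @ v) ` (words A k \<times> words A l)"
      by (metis (no_types, lifting) append_take_drop_id case_prod_conv image_eqI)
  qed (auto simp: words_def)
  have inj: "inj_on (\<lambda>(u, v). u @ v) (words A k \<times> words A l)"
    by (auto simp: words_def inj_on_def)
  have "(\<Sum>w\<in>words A (k + l). f w) = (\<Sum>(u, v)\<in>words A k \<times> words A l. f (u @ v))"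
    unfolding split by (subst sum.reindex[OF inj]) (simp add: case_prod_beta)
  then show ?thesis
    by (simp add: sum.cartesian_product)
qed

lemma word_prob_append: "word_prob p (u @ v) = word_prob p u * word_prob p v"
  by (simp add: word_prob_def)

lemma word_prob_nonneg: "(\<And>i. i \<in> set w \<Longrightarrow> p i \<ge> 0) \<Longrightarrow> word_prob p w \<ge> 0"
  unfolding word_prob_def by (induction w) auto

lemma word_prob_pos: "(\<And>i. i \<in> set w \<Longrightarrow> p i > 0) \<Longrightarrow> word_prob p w > 0"
  unfolding word_prob_def by (induction w) auto

lemma sum_word_prob_words:
  assumes "sum p A = 1"
  shows "(\<Sum>w\<in>words A N. word_prob p w) = 1"
proof (induction N)
  case (Suc N)
  then show ?case
    using assms
    by (simp add: sum_words_Suc word_prob_def flip: sum_distrib_left sum_distrib_right)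
qed (simp add: word_prob_def)

lemma finite_overlaps: "finite (overlaps S)"
  by (rule finite_subset[of _ "set (prefixes S)"]) (auto simp: overlaps_def)

definition ends_first_occurrence :: "'a list \<Rightarrow> 'a list \<Rightarrow> bool" where
  "ends_first_occurrence S w \<longleftrightarrow> sublist S w \<and> \<not> sublist S (butlast w)"

lemma ends_first_occurrence_imp_suffix:
  assumes "ends_first_occurrence S w"
  shows "suffix S w"
proof -
  obtain u v where w: "w = u @ S @ v" and "\<not> sublist S (butlast w)"
    using assms by (auto simp: ends_first_occurrence_def sublist_def)
  moreover have "sublist S (butlast w)" if "v \<noteq> []"
    using that w by (simp add: butlast_append)
  ultimately have "v = []"
    by blast
  then show ?thesis
    using w by (simp add: suffix_def)
qed

lemma sublist_prefix_trans: "sublist S u \<Longrightarrow> prefix u v \<Longrightarrow> sublist S v"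
  using prefix_imp_sublist sublist_order.order.trans by blast

lemma ends_first_occurrence_prefix_eq:
  assumes "ends_first_occurrence S v" "ends_first_occurrence S w" "prefix v w"
  shows "v = w"
proof (rule ccontr)
  assume "v \<noteq> w"
  with assms(3) obtain z where "w = v @ z" "z \<noteq> []"
    by (auto simp: prefix_def)
  then have "prefix v (butlast w)"
    by (simp add: butlast_append)
  then show False
    using assms(1,2) sublist_prefix_trans by (auto simp: ends_first_occurrence_def)
qed

lemma ends_first_occurrence_append_take:
  assumes "S \<noteq> []" "\<not> sublist S u"
  obtains j where "0 < j" "j \<le> length S" "ends_first_occurrence S (u @ take j S)"
proof -
  define j where "j = (LEAST j. sublist S (u @ take j S))"
  have "sublist S (u @ take (length S) S)"
    by simp
  then have occ: "sublist S (u @ take j S)" and "j \<le> length S"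
    unfolding j_def by (rule LeastI, rule Least_le)
  moreover have "0 < j"
    using occ assms(2) by (cases j) auto
  moreover have "\<not> sublist S (u @ take (j - 1) S)"
    using not_less_Least[of "j - 1" "\<lambda>j. sublist S (u @ take j S)"] \<open>0 < j\<close>
    unfolding j_def by simp
  moreover have "butlast (u @ take j S) = u @ take (j - 1) S"
    using \<open>0 < j\<close> \<open>j \<le> length S\<close> assms(1) by (simp add: butlast_append butlast_take)
  ultimately show ?thesis
    by (intro that) (auto simp: ends_first_occurrence_def)
qed

lemma overlap_if_ends_first_occurrence:
  assumes "ends_first_occurrence S (u @ R)" "prefix R S" "R \<noteq> []"
  shows "R \<in> overlaps S"
proof -
  have "suffix S (u @ R)"
    using assms(1) by (rule ends_first_occurrence_imp_suffix)
  then have "suffix R S"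
    using assms(2) by (metis prefix_length_le suffix_append suffix_length_suffix suffix_order.refl)
  then show ?thesis
    using assms by (simp add: overlaps_def)
qed

lemma card_overlaps_ending_first_occurrence:
  assumes "S \<noteq> []"
  shows "card {R \<in> overlaps S. ends_first_occurrence S (u @ R)} = of_bool (\<not> sublist S u)"
proof (cases "sublist S u")
  case True
  have "\<not> ends_first_occurrence S (u @ R)" if "R \<in> overlaps S" for R
  proof -
    have "butlast (u @ R) = u @ butlast R"
      using that by (simp add: overlaps_def butlast_append)
    then show ?thesis
      using sublist_prefix_trans[OF True, of "u @ butlast R"] by (simp add: ends_first_occurrence_def)
  qed
  then have "{R \<in> overlaps S. ends_first_occurrence S (u @ R)} = {}"
    by blast
  with True show ?thesis
    by (simp only: card.empty of_bool_eq(1) not_True_eq_False)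
next
  case False
  obtain j where j: "0 < j" "j \<le> length S" "ends_first_occurrence S (u @ take j S)"
    using ends_first_occurrence_append_take[OF assms False] .
  have "{R \<in> overlaps S. ends_first_occurrence S (u @ R)} = {take j S}"
  proof (intro equalityI subsetI)
    fix R assume R: "R \<in> {R \<in> overlaps S. ends_first_occurrence S (u @ R)}"
    then have "prefix (u @ R) (u @ take j S) \<or> prefix (u @ take j S) (u @ R)"
      by (simp, intro prefix_same_cases[of _ S]) (auto simp: overlaps_def take_is_prefix)
    then show "R \<in> {take j S}"
      using R j(3) ends_first_occurrence_prefix_eq[of S "u @ R" "u @ take j S"]
        ends_first_occurrence_prefix_eq[of S "u @ take j S" "u @ R"] by auto
  next
    fix R assume "R \<in> {take j S}"
    then show "R \<in> {R \<in> overlaps S. ends_first_occurrence S (u @ R)}"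
      using j assms overlap_if_ends_first_occurrence[OF j(3) take_is_prefix] by simp
  qed
  then show ?thesis
    using False by simp
qed

lemma ends_first_occurrence_append_eq_suffix:
  assumes "ends_first_occurrence S (u @ t)" "suffix R S" "length t = length R"
  shows "t = R"
proof -
  have "suffix S (u @ t)"
    using assms(1) by (rule ends_first_occurrence_imp_suffix)
  then have "suffix t S"
    using assms(2,3) by (metis suffix_append suffix_length_le suffix_length_suffix suffix_order.refl)
  then show ?thesis
    using assms(2,3) by (metis suffix_length_suffix suffix_order.antisym order_refl)
qed

section \<open>Streams of independent rolls\<close>

lemma measurable_stake_pmf:
  fixes D :: "'a::countable pmf"
  shows "stake N \<in> measurable (stream_space (measure_pmf D)) (count_space UNIV)"
proof -
  have "sets (stream_space (measure_pmf D)) = sets (stream_space (count_space UNIV))"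
    by (rule sets_stream_space_cong) simp
  then show ?thesis
    by (subst measurable_cong_sets[OF _ refl]) (auto intro: measurable_stake)
qed

lemma nn_integral_stream_space_stake:
  fixes D :: "'a::countable pmf" and g :: "'a list \<Rightarrow> real"
  assumes "finite A" "set_pmf D \<subseteq> A" "\<And>w. g w \<ge> 0"
  shows "(\<integral>\<^sup>+\<omega>. ennreal (g (stake N \<omega>)) \<partial>stream_space (measure_pmf D))
           = ennreal (\<Sum>w\<in>words A N. prod_list (map (pmf D) w) * g w)"
  using assms(3)
proof (induction N arbitrary: g)
  case 0
  interpret prob_space "stream_space (measure_pmf D)"
    by (rule prob_space.prob_space_stream_space[OF prob_space_measure_pmf])
  show ?case
    by (simp add: emeasure_space_1)
next
  case (Suc N)
  have weights_nonneg: "0 \<le> (\<Sum>w\<in>words A N. prod_list (map (pmf D) w) * g (x # w))" for x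
    using Suc.prems by (intro sum_nonneg mult_nonneg_nonneg prod_list_nonneg) auto
  have "(\<lambda>w. ennreal (g w)) \<in> borel_measurable (count_space UNIV)"
    by simp
  then have "(\<lambda>\<omega>. ennreal (g (stake (Suc N) \<omega>))) \<in> borel_measurable (stream_space (measure_pmf D))"
    by (rule measurable_compose[OF measurable_stake_pmf])
  then have "(\<integral>\<^sup>+\<omega>. ennreal (g (stake (Suc N) \<omega>)) \<partial>stream_space (measure_pmf D))
      = (\<integral>\<^sup>+x. (\<integral>\<^sup>+\<omega>. ennreal (g (stake (Suc N) (x ## \<omega>))) \<partial>stream_space (measure_pmf D)) \<partial>measure_pmf D)"
    by (rule prob_space.nn_integral_stream_space[OF prob_space_measure_pmf])
  also have "\<dots> = (\<integral>\<^sup>+x. ennreal (\<Sum>w\<in>words A N. prod_list (map (pmf D) w) * g (x # w)) \<partial>measure_pmf D)"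
    using Suc.IH[of "\<lambda>w. g (_ # w)"] Suc.prems by simp
  also have "\<dots> = (\<Sum>x\<in>A. ennreal (\<Sum>w\<in>words A N. prod_list (map (pmf D) w) * g (x # w)) * pmf D x)"
    using assms(1,2) by (intro nn_integral_measure_pmf_support) auto
  also have "\<dots> = ennreal (\<Sum>x\<in>A. pmf D x * (\<Sum>w\<in>words A N. prod_list (map (pmf D) w) * g (x # w)))"
    using weights_nonneg by (subst sum_ennreal[symmetric]) (simp_all add: ennreal_mult'' mult.commute)
  also have "\<dots> = ennreal (\<Sum>w\<in>words A (Suc N). prod_list (map (pmf D) w) * g w)"
    by (simp add: sum_words_Suc sum_distrib_left mult.assoc)
  finally show ?case .
qed

lemma prefix_stake_mono:
  assumes "j \<le> k"
  shows "prefix (stake j \<omega>) (stake k \<omega>)"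
proof (rule prefixI)
  show "stake k \<omega> = stake j \<omega> @ stake (k - j) (sdrop j \<omega>)"
    using assms by simp
qed

lemma butlast_stake: "butlast (stake j \<omega>) = stake (j - 1) \<omega>"
  by (cases j) (simp_all only: stake_Suc butlast_snoc, simp_all)

lemma ends_first_occurrence_stake_iff:
  assumes "S \<noteq> []" "sublist S (stake k \<omega>)"
  shows "ends_first_occurrence S (stake j \<omega>) \<longleftrightarrow> j = waiting_time S \<omega>"
proof -
  define y where "y = waiting_time S \<omega>"
  have occ: "sublist S (stake y \<omega>)"
    unfolding y_def waiting_time_def using assms(2) by (rule LeastI)
  have before: "\<not> sublist S (stake i \<omega>)" if "i < y" for i
    using not_less_Least that by (auto simp: y_def waiting_time_def)
  have "0 < y"
    using occ assms(1) by (cases y) auto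
  then have "ends_first_occurrence S (stake y \<omega>)"
    using occ before[of "y - 1"] by (simp add: ends_first_occurrence_def butlast_stake)
  moreover have "stake j \<omega> = stake y \<omega>" if "ends_first_occurrence S (stake j \<omega>)"
  proof (cases "j \<le> y")
    case True
    then show ?thesis
      using that calculation prefix_stake_mono by (blast intro: ends_first_occurrence_prefix_eq)
  next
    case False
    then show ?thesis
      using ends_first_occurrence_prefix_eq[OF calculation that prefix_stake_mono[of y j]] by simp
  qed
  then have "ends_first_occurrence S (stake j \<omega>) \<Longrightarrow> j = y"
    by (metis length_stake)
  ultimately show ?thesis
    by (auto simp: y_def)
qed

section \<open>Waiting for a pattern\<close>

locale pattern_waiting =
  fixes m :: nat and p :: "nat \<Rightarrow> real" and S :: "nat list"
  assumes p_nonneg: "\<And>i. i \<in> {1..m} \<Longrightarrow> p i \<ge> 0"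
    and p_sum: "(\<Sum>i=1..m. p i) = 1"
    and S_nonempty: "S \<noteq> []" and S_letters: "set S \<subseteq> {1..m}"
    and p_pos: "\<And>a. a \<in> set S \<Longrightarrow> p a > 0"
begin

text \<open>\<open>tail_prob k\<close> and \<open>hit_prob k\<close> are P(Y > k) and P(Y = k) for the waiting time Y;
  see \<open>emeasure_not_occurred\<close> and \<open>waiting_time_moment\<close>.\<close>

definition tail_prob :: "nat \<Rightarrow> real" where
  "tail_prob k = (\<Sum>w\<in>words {1..m} k. word_prob p w * of_bool (\<not> sublist S w))"

definition hit_prob :: "nat \<Rightarrow> real" where
  "hit_prob k = (\<Sum>w\<in>words {1..m} k. word_prob p w * of_bool (ends_first_occurrence S w))"

lemma word_prob_words_nonneg: "w \<in> words {1..m} N \<Longrightarrow> word_prob p w \<ge> 0"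
  unfolding words_def using p_nonneg by (intro word_prob_nonneg) blast

lemma tail_prob_nonneg: "tail_prob k \<ge> 0"
  unfolding tail_prob_def by (intro sum_nonneg) (simp add: word_prob_words_nonneg)

lemma hit_prob_nonneg: "hit_prob k \<ge> 0"
  unfolding hit_prob_def by (intro sum_nonneg) (simp add: word_prob_words_nonneg)

lemma tail_prob_le_1: "tail_prob k \<le> 1"
proof -
  have "tail_prob k \<le> (\<Sum>w\<in>words {1..m} k. word_prob p w)"
    unfolding tail_prob_def by (intro sum_mono) (simp add: word_prob_words_nonneg)
  then show ?thesis
    using p_sum by (simp add: sum_word_prob_words)
qed

lemma hit_prob_eq_0: "j < length S \<Longrightarrow> hit_prob j = 0"
  unfolding hit_prob_def
  by (intro sum.neutral) (auto simp: ends_first_occurrence_def words_def dest: sublist_length_le)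

lemma hit_prob_Suc: "hit_prob (Suc k) = tail_prob k - tail_prob (Suc k)"
proof -
  have "tail_prob k = (\<Sum>u\<in>words {1..m} k. \<Sum>v\<in>words {1..m} 1.
          word_prob p u * word_prob p v * of_bool (\<not> sublist S u))"
    using p_sum by (simp add: tail_prob_def sum_word_prob_words flip: sum_distrib_left sum_distrib_right)
  also have "\<dots> = (\<Sum>u\<in>words {1..m} k. \<Sum>v\<in>words {1..m} 1.
          word_prob p (u @ v) * of_bool (\<not> sublist S (butlast (u @ v))))"
    by (intro sum.cong refl) (auto simp: word_prob_append words_def length_Suc_conv)
  also have "\<dots> = (\<Sum>w\<in>words {1..m} (k + 1). word_prob p w * of_bool (\<not> sublist S (butlast w)))"
    by (simp only: sum_words_add)
  finally have "tail_prob k = \<dots>" .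
  moreover have "sublist S (butlast w) \<Longrightarrow> sublist S w" for w :: "nat list"
    using sublist_butlast sublist_order.order.trans by blast
  then have "of_bool (ends_first_occurrence S w)
      = (of_bool (\<not> sublist S (butlast w)) - of_bool (\<not> sublist S w) :: real)" for w
    by (auto simp: ends_first_occurrence_def)
  ultimately show ?thesis
    by (simp add: hit_prob_def tail_prob_def right_diff_distrib sum_subtractf)
qed

lemma overlap_in_words: "R \<in> overlaps S \<Longrightarrow> R \<in> words {1..m} (length R)"
  using S_letters by (auto simp: overlaps_def words_def dest: set_mono_prefix)

lemma word_prob_overlap_pos: "R \<in> overlaps S \<Longrightarrow> word_prob p R > 0"
  by (rule word_prob_pos) (auto simp: overlaps_def dest: set_mono_prefix intro: p_pos)

lemma hit_prob_add_overlap: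
  assumes "R \<in> overlaps S"
  shows "hit_prob (k + length R) =
           word_prob p R * (\<Sum>u\<in>words {1..m} k. word_prob p u * of_bool (ends_first_occurrence S (u @ R)))"
proof -
  have "suffix R S"
    using assms by (simp add: overlaps_def)
  then have "hit_prob (k + length R) = (\<Sum>u\<in>words {1..m} k. \<Sum>t\<in>words {1..m} (length R).
               if t = R then word_prob p u * word_prob p R * of_bool (ends_first_occurrence S (u @ R))
               else 0)"
    unfolding hit_prob_def sum_words_add
    by (intro sum.cong refl)
      (auto simp: word_prob_append words_def dest: ends_first_occurrence_append_eq_suffix)
  also have "\<dots> = (\<Sum>u\<in>words {1..m} k.
                     word_prob p u * word_prob p R * of_bool (ends_first_occurrence S (u @ R)))"
    using overlap_in_words[OF assms] by (simp add: finite_words)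
  finally show ?thesis
    by (simp add: sum_distrib_left algebra_simps)
qed

lemma tail_prob_eq_overlap_sum: "tail_prob k = (\<Sum>R\<in>overlaps S. hit_prob (k + length R) / word_prob p R)"
proof -
  have "(\<Sum>R\<in>overlaps S. hit_prob (k + length R) / word_prob p R)
      = (\<Sum>R\<in>overlaps S. \<Sum>u\<in>words {1..m} k. word_prob p u * of_bool (ends_first_occurrence S (u @ R)))"
  proof (intro sum.cong refl)
    fix R assume R: "R \<in> overlaps S"
    then show "hit_prob (k + length R) / word_prob p R
        = (\<Sum>u\<in>words {1..m} k. word_prob p u * of_bool (ends_first_occurrence S (u @ R)))"
      using word_prob_overlap_pos[OF R] by (simp add: hit_prob_add_overlap[OF R])
  qed
  also have "\<dots> = (\<Sum>u\<in>words {1..m} k.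
                     word_prob p u * real (card {R \<in> overlaps S. ends_first_occurrence S (u @ R)}))"
    by (subst sum.swap)
      (simp add: of_bool_def sum.If_cases finite_overlaps Collect_conj_eq flip: sum_distrib_left)
  also have "\<dots> = tail_prob k"
    unfolding tail_prob_def by (simp add: card_overlaps_ending_first_occurrence[OF S_nonempty])
  finally show ?thesis ..
qed

lemma tail_prob_add_length: "tail_prob (k + length S) \<le> (1 - word_prob p S) * tail_prob k"
proof -
  have "tail_prob (k + length S) = (\<Sum>u\<in>words {1..m} k. \<Sum>v\<in>words {1..m} (length S).
           word_prob p u * word_prob p v * of_bool (\<not> sublist S (u @ v)))"
    by (simp add: tail_prob_def sum_words_add word_prob_append)
  also have "\<dots> \<le> (\<Sum>u\<in>words {1..m} k. \<Sum>v\<in>words {1..m} (length S).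
           (word_prob p u * of_bool (\<not> sublist S u)) * (word_prob p v * of_bool (v \<noteq> S)))"
  proof (intro sum_mono)
    fix u v assume "u \<in> words {1..m} k" "v \<in> words {1..m} (length S)"
    moreover have "sublist S (u @ v)" if "sublist S u \<or> v = S"
      using that sublist_prefix_trans[of S u "u @ v"] by auto
    ultimately show "word_prob p u * word_prob p v * of_bool (\<not> sublist S (u @ v))
        \<le> (word_prob p u * of_bool (\<not> sublist S u)) * (word_prob p v * of_bool (v \<noteq> S))"
      using word_prob_words_nonneg by auto
  qed
  also have "\<dots> = tail_prob k * (\<Sum>v\<in>words {1..m} (length S). word_prob p v * of_bool (v \<noteq> S))"
    by (simp add: tail_prob_def sum_product)
  also have "(\<Sum>v\<in>words {1..m} (length S). word_prob p v * of_bool (v \<noteq> S)) = 1 - word_prob p S"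
  proof -
    have "(\<Sum>v\<in>words {1..m} (length S). word_prob p v * of_bool (v \<noteq> S))
        = (\<Sum>v\<in>words {1..m} (length S). word_prob p v)
          - (\<Sum>v\<in>words {1..m} (length S). if v = S then word_prob p v else 0)"
      by (subst sum_subtractf[symmetric]) (intro sum.cong refl, simp)
    moreover have "S \<in> words {1..m} (length S)"
      using S_letters by (simp add: words_def)
    ultimately show ?thesis
      using p_sum by (simp add: sum_word_prob_words finite_words)
  qed
  finally show ?thesis
    by (simp add: mult.commute)
qed

lemma tail_prob_geometric_bound:
  obtains \<rho> C where "0 < \<rho>" "\<rho> < 1" "\<And>k. tail_prob k \<le> C * \<rho> ^ k"
proof -
  \<comment> \<open>the maximum with 1/2 keeps \<open>\<theta>\<close> positive when P(S) = 1\<close>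
  define \<theta> where "\<theta> = max (1 - word_prob p S) (1 / 2)"
  have "word_prob p S > 0"
    using word_prob_pos p_pos by blast
  then have \<theta>: "0 < \<theta>" "\<theta> < 1" "1 - word_prob p S \<le> \<theta>"
    by (auto simp: \<theta>_def)
  have "tail_prob (k + length S) \<le> \<theta> * tail_prob k" for k
    using tail_prob_add_length[of k] tail_prob_nonneg[of k] \<theta>(3) mult_right_mono by fastforce
  then have "tail_prob k \<le> root (length S) \<theta> ^ k / \<theta>" for k
    using S_nonempty \<theta> tail_prob_le_1 by (intro geometric_bound_of_periodic_contraction) auto
  moreover have "0 < root (length S) \<theta>" "root (length S) \<theta> < 1"
    using S_nonempty \<theta> by auto
  ultimately show ?thesis
    by (intro that[of "root (length S) \<theta>" "1 / \<theta>"]) auto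
qed

lemma tail_prob_LIMSEQ: "tail_prob \<longlonglongrightarrow> 0"
proof -
  obtain \<rho> C where \<rho>: "0 < \<rho>" "\<rho> < 1" and bound: "\<And>k. tail_prob k \<le> C * \<rho> ^ k"
    using tail_prob_geometric_bound by blast
  show ?thesis
  proof (rule Lim_null_comparison)
    show "\<forall>\<^sub>F k in sequentially. norm (tail_prob k) \<le> C * \<rho> ^ k"
      using bound tail_prob_nonneg by simp
    show "(\<lambda>k. C * \<rho> ^ k) \<longlonglongrightarrow> 0"
      using \<rho> by (intro tendsto_mult_right_zero LIMSEQ_power_zero) auto
  qed
qed

lemma summable_hit_prob_moments: "summable (\<lambda>j. real j ^ i * hit_prob j)"
proof -
  obtain \<rho> C where \<rho>: "0 < \<rho>" "\<rho> < 1" and bound: "\<And>k. tail_prob k \<le> C * \<rho> ^ k"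
    using tail_prob_geometric_bound by blast
  have hit_bound: "hit_prob j \<le> C / \<rho> * \<rho> ^ j" for j
  proof (cases j)
    case 0
    then show ?thesis
      using hit_prob_eq_0[of 0] S_nonempty bound[of 0] tail_prob_nonneg[of 0] \<rho> by simp
  next
    case (Suc k)
    then have "hit_prob j \<le> tail_prob k"
      using hit_prob_Suc tail_prob_nonneg by simp
    also have "\<dots> \<le> C / \<rho> * \<rho> ^ j"
      using bound[of k] Suc \<rho>(1) by simp
    finally show ?thesis .
  qed
  show ?thesis
  proof (rule summable_comparison_test')
    show "summable (\<lambda>j. C / \<rho> * (real j ^ i * \<rho> ^ j))"
      using \<rho> by (intro summable_mult summable_power_times_geometric) auto
    show "norm (real j ^ i * hit_prob j) \<le> C / \<rho> * (real j ^ i * \<rho> ^ j)" for j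
      using mult_left_mono[OF hit_bound[of j], of "real j ^ i"] hit_prob_nonneg[of j] by (simp add: mult_ac)
  qed
qed

lemma hit_prob_sums_1: "hit_prob sums 1"
proof -
  have "(\<lambda>k. tail_prob k - tail_prob (Suc k)) sums (tail_prob 0 - 0)"
    by (rule telescope_sums'[OF tail_prob_LIMSEQ])
  moreover have "tail_prob 0 = 1"
    using S_nonempty by (simp add: tail_prob_def word_prob_def)
  ultimately have "(\<lambda>k. hit_prob (Suc k)) sums 1"
    by (simp add: hit_prob_Suc)
  then show ?thesis
    using hit_prob_eq_0[of 0] S_nonempty by (simp add: sums_Suc_iff)
qed

definition overlap_coeff :: "nat \<Rightarrow> real" where
  "overlap_coeff k = (\<Sum>R\<in>overlaps S. ((1 - real (length R)) ^ k - (- real (length R)) ^ k) / word_prob p R)"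

lemma hit_prob_moment: "(\<Sum>j. real j ^ n * hit_prob j) = ordered_partition_sum overlap_coeff {1..n}"
proof -
  have "ordered_partition_sum overlap_coeff {1..n} = (\<Sum>j. real j ^ card {1..n} * hit_prob j)"
  proof (rule ordered_partition_sum_eq_recurrence)
    show "(\<Sum>j. real j ^ 0 * hit_prob j) = 1"
      using hit_prob_sums_1 by (simp add: sums_iff)
    show "(\<Sum>j. real j ^ k * hit_prob j) =
        (\<Sum>i=1..k. real (k choose i) * overlap_coeff i * (\<Sum>j. real j ^ (k - i) * hit_prob j))"
      if "k \<ge> 1" for k
      unfolding overlap_coeff_def
    proof (rule moment_recurrence[OF hit_prob_Suc tail_prob_eq_overlap_sum _ summable_hit_prob_moments that])
      show "hit_prob j = 0" if "R \<in> overlaps S" "j < length R" for R j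
        using that by (auto simp: overlaps_def dest!: prefix_length_le intro: hit_prob_eq_0)
    qed
  qed simp
  then show ?thesis
    by simp
qed

abbreviation rolls :: "nat stream measure" where
  "rolls \<equiv> stream_space (measure_pmf (die m p))"

lemma pmf_die: "pmf (die m p) i = (if i \<in> {1..m} then p i else 0)"
proof -
  have "(\<integral>\<^sup>+i. ennreal (if i \<in> {1..m} then p i else 0) \<partial>count_space UNIV)
      = (\<Sum>i\<in>{1..m}. ennreal (if i \<in> {1..m} then p i else 0))"
    by (rule nn_integral_count_space') auto
  also have "\<dots> = (\<Sum>i\<in>{1..m}. ennreal (p i))"
    by simp
  also have "\<dots> = ennreal (\<Sum>i=1..m. p i)"
    using p_nonneg by (rule sum_ennreal)
  finally have "(\<integral>\<^sup>+i. ennreal (if i \<in> {1..m} then p i else 0) \<partial>count_space UNIV) = 1"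
    using p_sum by simp
  then show ?thesis
    unfolding die_def using p_nonneg by (subst pmf_embed_pmf) auto
qed

lemma nn_integral_rolls_stake:
  assumes "\<And>w. g w \<ge> 0"
  shows "(\<integral>\<^sup>+\<omega>. ennreal (g (stake N \<omega>)) \<partial>rolls) = ennreal (\<Sum>w\<in>words {1..m} N. word_prob p w * g w)"
proof -
  have "set_pmf (die m p) \<subseteq> {1..m}"
    by (auto simp: set_pmf_iff pmf_die split: if_splits)
  then have "(\<integral>\<^sup>+\<omega>. ennreal (g (stake N \<omega>)) \<partial>rolls)
      = ennreal (\<Sum>w\<in>words {1..m} N. prod_list (map (pmf (die m p)) w) * g w)"
    by (intro nn_integral_stream_space_stake assms) auto
  also have "\<dots> = ennreal (\<Sum>w\<in>words {1..m} N. word_prob p w * g w)"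
    by (intro arg_cong[where f = ennreal] sum.cong refl)
      (auto simp: words_def word_prob_def pmf_die intro!: arg_cong[where f = prod_list] map_cong)
  finally show ?thesis .
qed

lemma emeasure_not_occurred: "emeasure rolls {\<omega>\<in>space rolls. \<not> sublist S (stake k \<omega>)} = tail_prob k"
proof -
  have "{\<omega>\<in>space rolls. \<not> sublist S (stake k \<omega>)} \<in> sets rolls"
    using measurable_stake_pmf by measurable
  then have "emeasure rolls {\<omega>\<in>space rolls. \<not> sublist S (stake k \<omega>)}
      = (\<integral>\<^sup>+\<omega>. indicator {\<omega>\<in>space rolls. \<not> sublist S (stake k \<omega>)} \<omega> \<partial>rolls)"
    by (rule nn_integral_indicator[symmetric])
  also have "\<dots> = (\<integral>\<^sup>+\<omega>. ennreal (of_bool (\<not> sublist S (stake k \<omega>))) \<partial>rolls)"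
    by (intro nn_integral_cong) (simp add: indicator_def)
  also have "\<dots> = tail_prob k"
    using nn_integral_rolls_stake[of "\<lambda>w. of_bool (\<not> sublist S w)"] by (simp add: tail_prob_def)
  finally show ?thesis .
qed

lemma AE_occurs: "AE \<omega> in rolls. \<exists>k. sublist S (stake k \<omega>)"
proof -
  let ?N = "{\<omega>\<in>space rolls. \<forall>k. \<not> sublist S (stake k \<omega>)}"
  have "emeasure rolls ?N \<le> tail_prob k" for k
    unfolding emeasure_not_occurred[symmetric] using measurable_stake_pmf
    by (intro emeasure_mono) (auto, measurable)
  moreover have "(\<lambda>k. ennreal (tail_prob k)) \<longlonglongrightarrow> ennreal 0"
    using tail_prob_LIMSEQ by (rule tendsto_ennrealI)
  ultimately have "emeasure rolls ?N \<le> 0"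
    by (intro LIMSEQ_le_const) auto
  moreover have "?N \<in> sets rolls"
    using measurable_stake_pmf by measurable
  ultimately show ?thesis
    by (intro AE_I[of _ _ ?N]) auto
qed

lemma waiting_time_moment:
  "(\<integral>\<^sup>+\<omega>. ennreal (real (waiting_time S \<omega>) ^ n) \<partial>rolls) = ennreal (\<Sum>j. real j ^ n * hit_prob j)"
proof -
  have "(\<integral>\<^sup>+\<omega>. ennreal (real (waiting_time S \<omega>) ^ n) \<partial>rolls)
      = (\<integral>\<^sup>+\<omega>. (\<Sum>j. ennreal (real j ^ n * of_bool (ends_first_occurrence S (stake j \<omega>)))) \<partial>rolls)"
  proof (rule nn_integral_cong_AE)
    show "AE \<omega> in rolls. ennreal (real (waiting_time S \<omega>) ^ n)
        = (\<Sum>j. ennreal (real j ^ n * of_bool (ends_first_occurrence S (stake j \<omega>))))"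
      using AE_occurs
    proof eventually_elim
      case (elim \<omega>)
      then have "(\<lambda>j. ennreal (real j ^ n * of_bool (ends_first_occurrence S (stake j \<omega>))))
          = (\<lambda>j. if j = waiting_time S \<omega> then ennreal (real j ^ n) else 0)"
        using ends_first_occurrence_stake_iff[OF S_nonempty] by auto
      then show ?case
        using sums_unique[OF sums_single[of "waiting_time S \<omega>" "\<lambda>j. ennreal (real j ^ n)"]] by simp
    qed
  qed
  also have "\<dots> = (\<Sum>j. \<integral>\<^sup>+\<omega>. ennreal (real j ^ n * of_bool (ends_first_occurrence S (stake j \<omega>))) \<partial>rolls)"
    using measurable_stake_pmf by (intro nn_integral_suminf) measurable
  also have "\<dots> = (\<Sum>j. ennreal (real j ^ n * hit_prob j))"
  proof (rule suminf_cong)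
    fix j
    show "(\<integral>\<^sup>+\<omega>. ennreal (real j ^ n * of_bool (ends_first_occurrence S (stake j \<omega>))) \<partial>rolls)
        = ennreal (real j ^ n * hit_prob j)"
      using nn_integral_rolls_stake[of "\<lambda>w. real j ^ n * of_bool (ends_first_occurrence S w)"]
      by (simp add: hit_prob_def sum_distrib_left mult.left_commute)
  qed
  also have "\<dots> = ennreal (\<Sum>j. real j ^ n * hit_prob j)"
    using hit_prob_nonneg summable_hit_prob_moments by (intro suminf_ennreal2) auto
  finally show ?thesis .
qed

end

theorem theorem4p8:
  fixes m :: nat and p :: "nat \<Rightarrow> real" and S :: "nat list" and n :: nat
  assumes "m \<ge> 1"
    and "\<And>i. i \<in> {1..m} \<Longrightarrow> p i \<ge> 0"
    and "(\<Sum>i=1..m. p i) = 1"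
    and "S \<noteq> []" and "set S \<subseteq> {1..m}"
    and "\<And>a. a \<in> set S \<Longrightarrow> p a > 0"
    and "n \<ge> 1"
  shows "(\<integral>\<^sup>+ \<omega>. ennreal (real (waiting_time S \<omega>) ^ n) \<partial>stream_space (measure_pmf (die m p)))
    = ennreal (\<Sum>\<pi>\<in>set_partitions n. fact (card \<pi>) *
        (\<Prod>B\<in>\<pi>. \<Sum>R\<in>overlaps S.
           ((1 - real (length R)) ^ card B - (- real (length R)) ^ card B) / word_prob p R))"
proof -
  interpret pattern_waiting m p S
    using assms by unfold_locales auto
  have "(\<Sum>\<pi>\<in>set_partitions n. fact (card \<pi>) *
          (\<Prod>B\<in>\<pi>. \<Sum>R\<in>overlaps S.
             ((1 - real (length R)) ^ card B - (- real (length R)) ^ card B) / word_prob p R))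
      = ordered_partition_sum overlap_coeff {1..n}"
    by (simp add: set_partitions_def ordered_partition_sum_def overlap_coeff_def)
  then show ?thesis
    using waiting_time_moment[of n] hit_prob_moment[of n] by simp
qed

end
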